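(* Let $\alpha\ge0$ and $0\le\beta<1$. Every $f\in\mathcal{W}_{\mathcal{H}}^0(\alpha,\beta)$ is a close-to-convex harmonic mapping of $\mathbb{D}$; in particular it is univalent in $\mathbb{D}$.
   Context: Let $\mathbb{D}=\{z\in\mathbb{C}:|z|<1\}$. $\mathcal{H}^0$ denotes the class of harmonic maps $f=h+\overline{g}$ on $\mathbb{D}$, with $h,g$ analytic in $\mathbb{D}$, $h(z)=z+\sum_{n\ge2}a_nz^n$ and $g(z)=\sum_{n\ge2}b_nz^n$. For $\alpha\ge0$, $0\le\beta<1$, $\mathcal{W}_{\mathcal{H}}^0(\alpha,\beta)$ denotes the class of $f=h+\overline{g}\in\mathcal{H}^0$ such that $\Re\big(h'(z)+\alpha zh''(z)-\beta\big)>|g'(z)+\alpha zg''(z)|$ for all $z\in\mathbb{D}$. A harmonic map $f$ on $\mathbb{D}$ is close-to-convex if it is univalent and the complement of $f(\mathbb{D})$ can be written as a union of non-intersecting half-lines. *)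

theory Defs
  imports "HOL-Analysis.Analysis"
begin

abbreviation unit_disk :: "complex set" where
  "unit_disk \<equiv> ball 0 1"

text \<open>Class H^0: harmonic maps f = h + conj g with h, g analytic in the disk,
  h(z) = z + sum_{n>=2} a_n z^n, g(z) = sum_{n>=2} b_n z^n, i.e.
  h(0)=0, h'(0)=1, g(0)=0, g'(0)=0.  Represented by the pair (h,g).\<close>
definition class_H0 :: "(complex \<Rightarrow> complex) \<Rightarrow> (complex \<Rightarrow> complex) \<Rightarrow> bool" where
  "class_H0 h g \<longleftrightarrow> h holomorphic_on unit_disk \<and> g holomorphic_on unit_disk \<and>
     h 0 = 0 \<and> deriv h 0 = 1 \<and> g 0 = 0 \<and> deriv g 0 = 0"

definition class_WH0 :: "real \<Rightarrow> real \<Rightarrow> (complex \<Rightarrow> complex) \<Rightarrow> (complex \<Rightarrow> complex) \<Rightarrow> bool" where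
  "class_WH0 \<alpha> \<beta> h g \<longleftrightarrow> class_H0 h g \<and>
     (\<forall>z\<in>unit_disk. Re (deriv h z + of_real \<alpha> * z * deriv (deriv h) z - of_real \<beta>)
                     > cmod (deriv g z + of_real \<alpha> * z * deriv (deriv g) z))"

definition half_line :: "complex set \<Rightarrow> bool" where
  "half_line S \<longleftrightarrow> (\<exists>a d. d \<noteq> 0 \<and> S = {a + of_real t * d | t. t \<ge> 0})"

definition close_to_convex :: "(complex \<Rightarrow> complex) \<Rightarrow> bool" where
  "close_to_convex f \<longleftrightarrow> inj_on f unit_disk \<and>
     (\<exists>L. (\<forall>S\<in>L. half_line S) \<and> pairwise disjnt L \<and> \<Union>L = - (f ` unit_disk))"

end

theory Submission
  imports Defs "HOL-Complex_Analysis.Complex_Analysis" "HOL-Real_Asymp.Real_Asymp"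
begin

text \<open>
  Integrating the defining inequality along radii gives \<open>Re h' > |g'| + \<beta> \<ge> |g'|\<close> on the disk:
  for a suitable unimodular \<open>\<epsilon>\<close>, positivity of \<open>Re (q + \<alpha> z q')\<close> with
  \<open>q = h' + \<epsilon> g' - \<beta>\<close> propagates \<open>Re q > 0\<close> from the origin outwards.
  Hence \<open>f = h + conj g\<close> is a strictly monotone operator on the disk, i.e.
  \<open>\<langle>z\<^sub>2 - z\<^sub>1, f z\<^sub>2 - f z\<^sub>1\<rangle> > 0\<close>, and in particular injective.

  For a continuous strictly monotone map \<open>f\<close> of the unit ball, every \<open>u\<close> outside the image
  admits exactly one unit vector \<open>p\<close> with \<open>\<langle>z - p, f z - u\<rangle> \<ge> 0\<close> for all \<open>z\<close> in the ball:
  existence comes from Brouwer's fixed point theorem applied to the dilations \<open>f (r z)\<close>,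
  \<open>r \<rightarrow> 1\<close>, uniqueness from strict monotonicity. The points \<open>u\<close> belonging to a fixed \<open>p\<close>
  form a closed set invariant under \<open>u \<mapsto> u + t p\<close>, \<open>t \<ge> 0\<close>, and disjoint from the image,
  so the complement of the image is the disjoint union of the half-lines it cuts out of
  the lines in direction \<open>p\<close>.
\<close>

section \<open>Radial integration of the defining inequality\<close>

lemma pos_at_1_if_pos_plus_mult_deriv:
  fixes u u' :: "real \<Rightarrow> real" and a :: real
  assumes deriv: "\<And>s. s \<in> {0..1} \<Longrightarrow> (u has_real_derivative u' s) (at s)"
    and "a \<ge> 0" and "u 0 > 0"
    and pos: "\<And>s. s \<in> {0..1} \<Longrightarrow> u s + a * s * u' s > 0"
  shows "u 1 > 0"
proof (rule ccontr)
  assume "\<not> u 1 > 0"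
  define S where "S = {0..1} \<inter> u -` {..0}"
  have "continuous_on {0..1} u"
    using deriv by (meson DERIV_isCont continuous_at_imp_continuous_on)
  then have "closed S"
    unfolding S_def by (rule continuous_closed_preimage) auto
  moreover have "1 \<in> S" and bdd: "bdd_below S"
    using \<open>\<not> u 1 > 0\<close> unfolding S_def by auto
  ultimately have "Inf S \<in> S"
    using closed_contains_Inf by blast
  define s where "s = Inf S"
  have s: "s \<in> {0..1}" "u s \<le> 0"
    using \<open>Inf S \<in> S\<close> unfolding s_def S_def by auto
  with \<open>u 0 > 0\<close> have "s > 0"
    by (metis atLeastAtMost_iff less_eq_real_def not_le)
  have below: "u r > 0" if "0 \<le> r" "r < s" for r
    using cInf_lower[OF _ bdd, of r] that s unfolding s_def S_def by force
  \<comment> \<open>at the first zero \<open>s\<close> of \<open>u\<close> the hypothesis forces \<open>u' s > 0\<close>, incompatible with \<open>u > 0\<close> on \<open>[0, s)\<close>\<close>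
  from pos[OF s(1)] s(2) have "a * s * u' s > 0"
    by linarith
  with \<open>a \<ge> 0\<close> \<open>s > 0\<close> have "u' s > 0"
    by (smt (verit) mult_nonneg_nonneg zero_less_mult_iff)
  then obtain d where "d > 0" and d: "\<And>r. r > 0 \<Longrightarrow> r < d \<Longrightarrow> u (s - r) < u s"
    using DERIV_pos_inc_left[OF deriv[OF s(1)]] by blast
  define r where "r = min (d/2) (s/2)"
  have "u (s - r) < u s" and "u (s - r) > 0"
    using d below[of "s - r"] \<open>d > 0\<close> \<open>s > 0\<close> unfolding r_def by auto
  with s show False
    by linarith
qed

lemma Re_pos_if_Re_pos_plus_mult_deriv:
  fixes q :: "complex \<Rightarrow> complex" and \<alpha> :: real
  assumes holo: "q holomorphic_on S" and "open S" "convex S" "0 \<in> S" "z \<in> S"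
    and "\<alpha> \<ge> 0" and "Re (q 0) > 0"
    and pos: "\<And>w. w \<in> S \<Longrightarrow> Re (q w + of_real \<alpha> * w * deriv q w) > 0"
  shows "Re (q z) > 0"
proof -
  have seg: "of_real s * z \<in> S" if "s \<in> {0..1}" for s
    using convexD_alt[OF \<open>convex S\<close> \<open>0 \<in> S\<close> \<open>z \<in> S\<close>, of s] that
    by (simp add: scaleR_conv_of_real)
  define u where "u s = Re (q (of_real s * z))" for s
  define u' where "u' s = Re (deriv q (of_real s * z) * z)" for s
  have "(u has_real_derivative u' s) (at s)" if "s \<in> {0..1}" for s
  proof -
    have "(q has_field_derivative deriv q (of_real s * z)) (at (of_real s * z))"
      using holomorphic_derivI[OF holo \<open>open S\<close> seg[OF that]] .
    then have "((\<lambda>x. q (x * z)) has_field_derivative deriv q (of_real s * z) * z) (at (of_real s))"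
      by (rule DERIV_chain2) (auto intro!: derivative_eq_intros)
    from has_field_derivative_Re[OF has_vector_derivative_real_field[OF this, where s = UNIV]]
    show ?thesis
      unfolding u_def[abs_def] u'_def by simp
  qed
  moreover have "u s + \<alpha> * s * u' s > 0" if "s \<in> {0..1}" for s
    using pos[OF seg[OF that]] by (simp add: u_def u'_def algebra_simps)
  ultimately have "u 1 > 0"
    using pos_at_1_if_pos_plus_mult_deriv[of u u' \<alpha>] \<open>\<alpha> \<ge> 0\<close> \<open>Re (q 0) > 0\<close>
    by (simp add: u_def)
  then show ?thesis
    by (simp add: u_def)
qed

lemma class_WH0_Re_deriv_gt:
  assumes W: "class_WH0 \<alpha> \<beta> h g" and "\<alpha> \<ge> 0" "\<beta> < 1" and z: "z \<in> unit_disk"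
  shows "cmod (deriv g z) + \<beta> < Re (deriv h z)"
proof -
  have hh: "h holomorphic_on unit_disk" and gh: "g holomorphic_on unit_disk"
    and "deriv h 0 = 1" "deriv g 0 = 0"
    and WH: "\<And>w. w \<in> unit_disk \<Longrightarrow> Re (deriv h w + of_real \<alpha> * w * deriv (deriv h) w - of_real \<beta>)
                     > cmod (deriv g w + of_real \<alpha> * w * deriv (deriv g) w)"
    using W unfolding class_WH0_def class_H0_def by auto
  \<comment> \<open>the rotation \<open>\<epsilon>\<close> turns \<open>\<epsilon> g'(z)\<close> into \<open>-|g'(z)|\<close>, so \<open>Re q(z) > 0\<close> below is the claim\<close>
  define \<epsilon> where "\<epsilon> = - cnj (sgn (deriv g z))"
  have "cmod \<epsilon> \<le> 1"
    by (simp add: \<epsilon>_def norm_sgn)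
  have \<epsilon>_g: "\<epsilon> * deriv g z = - of_real (cmod (deriv g z))"
  proof (cases "deriv g z = 0")
    case False
    have "cnj (deriv g z) * deriv g z = of_real (cmod (deriv g z)) * of_real (cmod (deriv g z))"
      using complex_norm_square[of "deriv g z"] by (simp add: power2_eq_square mult.commute)
    with False show ?thesis
      by (simp add: \<epsilon>_def sgn_div_norm scaleR_conv_of_real field_simps)
  qed (simp add: \<epsilon>_def)
  define q where "q w = deriv h w + \<epsilon> * deriv g w - of_real \<beta>" for w
  have h': "deriv h holomorphic_on unit_disk" and g': "deriv g holomorphic_on unit_disk"
    using hh gh by (auto intro: holomorphic_deriv)
  have "q holomorphic_on unit_disk"
    unfolding q_def by (intro holomorphic_intros h' g')
  moreover have "Re (q w + of_real \<alpha> * w * deriv q w) > 0" if w: "w \<in> unit_disk" for w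
  proof -
    let ?G = "deriv g w + of_real \<alpha> * w * deriv (deriv g) w"
    have "(q has_field_derivative deriv (deriv h) w + \<epsilon> * deriv (deriv g) w - 0) (at w)"
      unfolding q_def[abs_def]
      by (intro DERIV_diff DERIV_add DERIV_cmult DERIV_const
          holomorphic_derivI[OF h' open_ball w] holomorphic_derivI[OF g' open_ball w])
    then have "deriv q w = deriv (deriv h) w + \<epsilon> * deriv (deriv g) w"
      by (simp add: DERIV_imp_deriv)
    then have E: "q w + of_real \<alpha> * w * deriv q w
        = (deriv h w + of_real \<alpha> * w * deriv (deriv h) w - of_real \<beta>) + \<epsilon> * ?G"
      by (simp add: q_def algebra_simps)
    have "cmod (\<epsilon> * ?G) \<le> cmod ?G"
      unfolding norm_mult by (rule mult_left_le_one_le) (use \<open>cmod \<epsilon> \<le> 1\<close> in auto)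
    then have "- cmod ?G \<le> Re (\<epsilon> * ?G)"
      using abs_Re_le_cmod[of "\<epsilon> * ?G"] by linarith
    then show ?thesis
      unfolding E plus_complex.sel using WH[OF w] by linarith
  qed
  moreover have "Re (q 0) > 0"
    using \<open>deriv h 0 = 1\<close> \<open>deriv g 0 = 0\<close> \<open>\<beta> < 1\<close> by (simp add: q_def)
  ultimately have "Re (q z) > 0"
    using Re_pos_if_Re_pos_plus_mult_deriv[OF _ open_ball convex_ball _ z \<open>\<alpha> \<ge> 0\<close>] by simp
  then show ?thesis
    using \<epsilon>_g by (simp add: q_def)
qed

section \<open>Monotone operators\<close>

definition monotone_operator_on :: "'a::real_inner set \<Rightarrow> ('a \<Rightarrow> 'a) \<Rightarrow> bool" where
  "monotone_operator_on S f \<longleftrightarrow> (\<forall>x\<in>S. \<forall>y\<in>S. 0 \<le> (y - x) \<bullet> (f y - f x))"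

definition strictly_monotone_operator_on :: "'a::real_inner set \<Rightarrow> ('a \<Rightarrow> 'a) \<Rightarrow> bool" where
  "strictly_monotone_operator_on S f \<longleftrightarrow> (\<forall>x\<in>S. \<forall>y\<in>S. x \<noteq> y \<longrightarrow> 0 < (y - x) \<bullet> (f y - f x))"

lemma monotone_operator_onD:
  "monotone_operator_on S f \<Longrightarrow> x \<in> S \<Longrightarrow> y \<in> S \<Longrightarrow> 0 \<le> (y - x) \<bullet> (f y - f x)"
  unfolding monotone_operator_on_def by blast

lemma strictly_monotone_operator_onD:
  "strictly_monotone_operator_on S f \<Longrightarrow> x \<in> S \<Longrightarrow> y \<in> S \<Longrightarrow> x \<noteq> y
    \<Longrightarrow> 0 < (y - x) \<bullet> (f y - f x)"
  unfolding strictly_monotone_operator_on_def by blast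

lemma strictly_monotone_operator_on_imp_monotone:
  "strictly_monotone_operator_on S f \<Longrightarrow> monotone_operator_on S f"
  unfolding strictly_monotone_operator_on_def monotone_operator_on_def
  by (metis order.order_iff_strict right_minus_eq inner_zero_left)

lemma strictly_monotone_operator_on_imp_inj_on:
  "strictly_monotone_operator_on S f \<Longrightarrow> inj_on f S"
  unfolding strictly_monotone_operator_on_def inj_on_def by force

lemma strictly_monotone_operator_on_if_derivative_pos:
  fixes f :: "'a::real_inner \<Rightarrow> 'a"
  assumes "convex S"
    and deriv: "\<And>x. x \<in> S \<Longrightarrow> (f has_derivative f' x) (at x)"
    and pos: "\<And>x v. x \<in> S \<Longrightarrow> v \<noteq> 0 \<Longrightarrow> 0 < v \<bullet> f' x v"
  shows "strictly_monotone_operator_on S f"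
  unfolding strictly_monotone_operator_on_def
proof (intro ballI impI)
  fix x y assume "x \<in> S" "y \<in> S" "x \<noteq> y"
  define v where "v = y - x"
  define \<phi> where "\<phi> t = v \<bullet> f (x + t *\<^sub>R v)" for t
  have der: "\<exists>D. (\<phi> has_real_derivative D) (at t) \<and> D > 0" if "0 \<le> t" "t \<le> 1" for t
  proof -
    define w where "w = x + t *\<^sub>R v"
    have "w \<in> S"
      using convexD_alt[OF \<open>convex S\<close> \<open>x \<in> S\<close> \<open>y \<in> S\<close>, of t] that
      by (simp add: w_def v_def algebra_simps)
    have "bounded_linear (f' w)"
      using deriv[OF \<open>w \<in> S\<close>] by (rule has_derivative_bounded_linear)
    have "((\<lambda>t. x + t *\<^sub>R v) has_derivative (\<lambda>s. s *\<^sub>R v)) (at t)"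
      using has_derivative_add[OF has_derivative_const has_derivative_scaleR_left[OF has_derivative_ident]]
      by simp
    from has_derivative_compose[OF this deriv[OF \<open>w \<in> S\<close>, unfolded w_def]]
    have "(\<phi> has_derivative (\<lambda>s. v \<bullet> f' w (s *\<^sub>R v))) (at t)"
      unfolding \<phi>_def[abs_def] w_def by (rule has_derivative_inner_right)
    moreover have "(\<lambda>s. v \<bullet> f' w (s *\<^sub>R v)) = (*) (v \<bullet> f' w v)"
      using linear_scale[OF bounded_linear.linear[OF \<open>bounded_linear (f' w)\<close>]]
      by (auto simp: mult.commute)
    moreover have "v \<noteq> 0"
      using \<open>x \<noteq> y\<close> by (simp add: v_def)
    ultimately show ?thesis
      using pos[OF \<open>w \<in> S\<close>] by (auto simp: has_field_derivative_def)
  qed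
  have "\<phi> 0 < \<phi> 1"
    by (rule DERIV_pos_imp_increasing[of 0 1]) (simp_all add: der)
  then show "0 < (y - x) \<bullet> (f y - f x)"
    by (simp add: \<phi>_def v_def inner_diff_right)
qed

lemma complex_inner_mult_self: "v \<bullet> (a * v) = (cmod v)\<^sup>2 * Re a"
  unfolding inner_complex_def cmod_power2 by (simp add: power2_eq_square algebra_simps)

lemma complex_inner_cnj_mult_self: "v \<bullet> cnj (a * v) = Re (a * v\<^sup>2)"
  by (simp add: inner_complex_def power2_eq_square algebra_simps)

lemma strictly_monotone_operator_on_harmonic:
  fixes h g :: "complex \<Rightarrow> complex"
  assumes "h holomorphic_on S" "g holomorphic_on S" "open S" "convex S"
    and dominant: "\<And>w. w \<in> S \<Longrightarrow> cmod (deriv g w) < Re (deriv h w)"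
  shows "strictly_monotone_operator_on S (\<lambda>z. h z + cnj (g z))"
proof (rule strictly_monotone_operator_on_if_derivative_pos[OF \<open>convex S\<close>])
  fix w assume "w \<in> S"
  have "(h has_field_derivative deriv h w) (at w)" "(g has_field_derivative deriv g w) (at w)"
    using holomorphic_derivI assms \<open>w \<in> S\<close> by blast+
  then show "((\<lambda>z. h z + cnj (g z)) has_derivative (\<lambda>v. deriv h w * v + cnj (deriv g w * v))) (at w)"
    unfolding has_field_derivative_def by (intro has_derivative_add has_derivative_cnj)
next
  fix w v :: complex assume "w \<in> S" "v \<noteq> 0"
  have "\<bar>Re (deriv g w * v\<^sup>2)\<bar> \<le> (cmod v)\<^sup>2 * cmod (deriv g w)"
    using abs_Re_le_cmod[of "deriv g w * v\<^sup>2"] by (simp add: norm_mult norm_power mult.commute)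
  moreover have "(cmod v)\<^sup>2 * cmod (deriv g w) < (cmod v)\<^sup>2 * Re (deriv h w)"
    using dominant[OF \<open>w \<in> S\<close>] \<open>v \<noteq> 0\<close> by simp
  ultimately show "0 < v \<bullet> (deriv h w * v + cnj (deriv g w * v))"
    unfolding inner_add_right complex_inner_mult_self complex_inner_cnj_mult_self by linarith
qed

section \<open>The complement of the image of a strictly monotone map of the ball\<close>

lemma inner_diff_unit_nonpos:
  fixes p z :: "'a::real_inner"
  assumes "norm p = 1" "norm z \<le> 1"
  shows "(z - p) \<bullet> p \<le> 0"
proof -
  have "z \<bullet> p \<le> norm z * norm p"
    by (rule norm_cauchy_schwarz)
  moreover have "p \<bullet> p = 1"
    using assms(1) by (simp add: power2_norm_eq_inner[symmetric])
  ultimately show ?thesis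
    using assms by (simp add: inner_diff_left)
qed

text \<open>\<open>u \<in> monotone_boundary_values f p\<close> says that \<open>f\<close> stays monotone on \<open>ball 0 1 \<union> {p}\<close>
  when extended by \<open>f p = u\<close>.\<close>

definition monotone_boundary_values :: "('a::real_inner \<Rightarrow> 'a) \<Rightarrow> 'a \<Rightarrow> 'a set" where
  "monotone_boundary_values f p = {u. \<forall>z\<in>ball 0 1. 0 \<le> (z - p) \<bullet> (f z - u)}"

lemma monotone_boundary_valuesD:
  "u \<in> monotone_boundary_values f p \<Longrightarrow> z \<in> ball 0 1 \<Longrightarrow> 0 \<le> (z - p) \<bullet> (f z - u)"
  unfolding monotone_boundary_values_def by blast

lemma closed_monotone_boundary_values: "closed (monotone_boundary_values f p)"
proof -
  have "monotone_boundary_values f p = (\<Inter>z\<in>ball 0 1. {u. 0 \<le> (z - p) \<bullet> (f z - u)})"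
    by (auto simp: monotone_boundary_values_def)
  then show ?thesis
    by (auto intro!: closed_INT closed_Collect_le continuous_intros)
qed

lemma monotone_boundary_values_add_ray:
  assumes "norm p = 1" "u \<in> monotone_boundary_values f p" "0 \<le> t"
  shows "u + t *\<^sub>R p \<in> monotone_boundary_values f p"
  unfolding monotone_boundary_values_def
proof safe
  fix z assume "z \<in> ball (0::'a) 1"
  then have "(z - p) \<bullet> p \<le> 0"
    using inner_diff_unit_nonpos[OF assms(1)] by simp
  moreover have "0 \<le> (z - p) \<bullet> (f z - u)"
    using monotone_boundary_valuesD[OF assms(2) \<open>z \<in> ball 0 1\<close>] .
  moreover have "(z - p) \<bullet> (f z - (u + t *\<^sub>R p)) = (z - p) \<bullet> (f z - u) - t * ((z - p) \<bullet> p)"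
    by (simp add: inner_diff_right inner_add_right)
  moreover have "t * ((z - p) \<bullet> p) \<le> 0"
    using \<open>0 \<le> t\<close> \<open>(z - p) \<bullet> p \<le> 0\<close> by (rule mult_nonneg_nonpos)
  ultimately show "0 \<le> (z - p) \<bullet> (f z - (u + t *\<^sub>R p))"
    by linarith
qed

lemma monotone_boundary_values_lower_bound:
  "u \<in> monotone_boundary_values f p \<Longrightarrow> p \<bullet> f 0 \<le> p \<bullet> u"
  using monotone_boundary_valuesD[of u f p 0] by (simp add: inner_diff_right)

lemma monotone_boundary_values_disjnt_image:
  fixes f :: "'a::euclidean_space \<Rightarrow> 'a"
  assumes mono: "strictly_monotone_operator_on (ball 0 1) f" and "norm p = 1"
    and u: "u \<in> monotone_boundary_values f p"
  shows "u \<notin> f ` ball 0 1"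
proof
  assume "u \<in> f ` ball 0 1"
  then obtain z where z: "z \<in> ball 0 1" and "u = f z"
    by auto
  define z' where "z' = (1/2) *\<^sub>R z + (1/2) *\<^sub>R p"
  have "z \<noteq> p"
    using z \<open>norm p = 1\<close> by auto
  then have "z' \<in> open_segment z p"
    unfolding z'_def in_segment by (intro conjI exI[of _ "1/2"]) auto
  then have "dist 0 z' < dist 0 z \<or> dist 0 z' < dist 0 p"
    by (rule dist_decreases_open_segment)
  with z \<open>norm p = 1\<close> have "z' \<in> ball 0 1"
    by auto
  have "z' \<noteq> z"
    using \<open>z' \<in> open_segment z p\<close> by (simp add: open_segment_def)
  then have "0 < (z' - z) \<bullet> (f z' - f z)"
    using strictly_monotone_operator_onD[OF mono z \<open>z' \<in> ball 0 1\<close>] by simp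
  moreover have "0 \<le> (z' - p) \<bullet> (f z' - f z)"
    using monotone_boundary_valuesD[OF u \<open>z' \<in> ball 0 1\<close>] \<open>u = f z\<close> by simp
  moreover have "z' - p = - (z' - z)"
    by (simp add: z'_def algebra_simps flip: scaleR_add_left)
  then have "(z' - p) \<bullet> (f z' - f z) = - ((z' - z) \<bullet> (f z' - f z))"
    by (simp only: inner_minus_left)
  ultimately show False
    by linarith
qed

lemma monotone_boundary_values_unique:
  fixes f :: "'a::euclidean_space \<Rightarrow> 'a"
  assumes mono: "strictly_monotone_operator_on (ball 0 1) f" and "norm p = 1" "norm q = 1"
    and up: "u \<in> monotone_boundary_values f p" and uq: "u \<in> monotone_boundary_values f q"
  shows "p = q"
proof (rule ccontr)
  assume "p \<noteq> q"
  define z where "z l = (1 - l) *\<^sub>R p + l *\<^sub>R q" for l :: real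
  have z_in: "z l \<in> ball 0 1" if "0 < l" "l < 1" for l
  proof -
    have "z l \<in> open_segment p q"
      unfolding z_def in_segment using that \<open>p \<noteq> q\<close> by auto
    then have "dist 0 (z l) < dist 0 p \<or> dist 0 (z l) < dist 0 q"
      by (rule dist_decreases_open_segment)
    with assms(2,3) show ?thesis
      by auto
  qed
  \<comment> \<open>the inequalities at \<open>p\<close> and at \<open>q\<close> pull in opposite directions along the chord\<close>
  have orth: "(q - p) \<bullet> (f (z l) - u) = 0" if "0 < l" "l < 1" for l
  proof -
    have "z l - p = l *\<^sub>R (q - p)" "z l - q = (l - 1) *\<^sub>R (q - p)"
      by (simp_all add: z_def algebra_simps)
    moreover have "0 \<le> (z l - p) \<bullet> (f (z l) - u)" "0 \<le> (z l - q) \<bullet> (f (z l) - u)"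
      using monotone_boundary_valuesD[OF up z_in[OF that]] monotone_boundary_valuesD[OF uq z_in[OF that]] .
    ultimately have "0 \<le> l * ((q - p) \<bullet> (f (z l) - u))" "0 \<le> (l - 1) * ((q - p) \<bullet> (f (z l) - u))"
      by simp_all
    then show ?thesis
      using that by (smt (verit) zero_le_mult_iff)
  qed
  have diff: "z (3/4) - z (1/2) = (1/4) *\<^sub>R (q - p)"
    by (simp add: z_def algebra_simps flip: scaleR_add_left)
  then have "z (1/2) \<noteq> z (3/4)"
    using \<open>p \<noteq> q\<close> by auto
  then have "0 < (z (3/4) - z (1/2)) \<bullet> (f (z (3/4)) - f (z (1/2)))"
    using strictly_monotone_operator_onD[OF mono z_in z_in] by simp
  moreover have "(z (3/4) - z (1/2)) \<bullet> (f (z (3/4)) - f (z (1/2)))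
      = (1/4) * ((q - p) \<bullet> (f (z (3/4)) - u) - (q - p) \<bullet> (f (z (1/2)) - u))"
    unfolding diff by (simp add: inner_diff_right)
  ultimately show False
    using orth[of "1/2"] orth[of "3/4"] by simp
qed

lemma monotone_boundary_value_exists_cball:
  fixes g :: "'a::euclidean_space \<Rightarrow> 'a"
  assumes cont: "continuous_on (cball 0 1) g" and mono: "monotone_operator_on (cball 0 1) g"
    and u: "u \<notin> g ` cball 0 1"
  obtains p where "norm p = 1" "\<And>z. z \<in> cball 0 1 \<Longrightarrow> 0 \<le> (z - p) \<bullet> (g z - u)"
proof -
  define Y where "Y x = x - g x + u" for x
  \<comment> \<open>\<open>Y\<close> followed by the radial retraction onto the closed ball; a fixed point \<open>p\<close> of it
    has \<open>g p = u\<close> unless \<open>Y p\<close> had to be retracted\<close>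
  define \<Phi> where "\<Phi> x = Y x /\<^sub>R max 1 (norm (Y x))" for x
  have cont_\<Phi>: "continuous_on (cball 0 1) \<Phi>"
    unfolding \<Phi>_def Y_def by (intro continuous_intros cont) auto
  have \<Phi>_into: "\<Phi> \<in> cball 0 1 \<rightarrow> cball 0 1"
    by (auto simp: \<Phi>_def field_simps max_def)
  obtain p where p: "p \<in> cball 0 1" "\<Phi> p = p"
    by (rule brouwer[OF compact_cball convex_cball _ cont_\<Phi> \<Phi>_into]) auto
  have "norm (Y p) > 1"
  proof (rule ccontr)
    assume "\<not> norm (Y p) > 1"
    then have "Y p = p"
      using p(2) by (simp add: \<Phi>_def)
    then show False
      using u p(1) by (auto simp: Y_def)
  qed
  define c where "c = norm (Y p)"
  have "c > 1"
    using \<open>norm (Y p) > 1\<close> by (simp add: c_def)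
  have p_eq: "p = Y p /\<^sub>R c"
    using p(2) \<open>c > 1\<close> by (simp add: \<Phi>_def c_def)
  then have "c *\<^sub>R p = c *\<^sub>R (Y p /\<^sub>R c)"
    by (rule arg_cong)
  with \<open>c > 1\<close> have "Y p = c *\<^sub>R p"
    by simp
  then have "norm (Y p) = c * norm p"
    using \<open>c > 1\<close> by simp
  with \<open>c > 1\<close> have "norm p = 1"
    unfolding c_def[symmetric] by simp
  have "u - g p = (c - 1) *\<^sub>R p"
    using \<open>Y p = c *\<^sub>R p\<close> by (simp add: Y_def algebra_simps)
  moreover have "0 \<le> (z - p) \<bullet> (g z - u)" if z: "z \<in> cball 0 1" for z
  proof -
    have "0 \<le> (z - p) \<bullet> (g z - g p)"
      using monotone_operator_onD[OF mono p(1) z] .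
    moreover have "(z - p) \<bullet> p \<le> 0"
      using inner_diff_unit_nonpos[OF \<open>norm p = 1\<close>] z by simp
    moreover have "(z - p) \<bullet> (g z - u) = (z - p) \<bullet> (g z - g p) - (c - 1) * ((z - p) \<bullet> p)"
      using \<open>u - g p = (c - 1) *\<^sub>R p\<close>
      by (metis diff_diff_eq2 diff_add_cancel inner_diff_right inner_scaleR_right)
    ultimately show ?thesis
      using \<open>c > 1\<close> by (smt (verit) mult_nonneg_nonpos)
  qed
  then show ?thesis
    using that \<open>norm p = 1\<close> by blast
qed

lemma monotone_boundary_value_exists:
  fixes f :: "'a::euclidean_space \<Rightarrow> 'a"
  assumes cont: "continuous_on (ball 0 1) f" and mono: "monotone_operator_on (ball 0 1) f"
    and u: "u \<notin> f ` ball 0 1"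
  obtains p where "norm p = 1" "u \<in> monotone_boundary_values f p"
proof -
  define r where "r n = 1 - 1 / real (n + 2)" for n :: nat
  have r: "0 < r n" "r n < 1" for n
    by (simp_all add: r_def)
  have scaled: "r n *\<^sub>R z \<in> ball 0 1" if "z \<in> cball 0 1" for n and z :: 'a
  proof -
    have "norm (r n *\<^sub>R z) = r n * norm z"
      using r[of n] by simp
    also have "\<dots> \<le> r n"
      using that r[of n] by (intro mult_left_le) auto
    also have "\<dots> < 1"
      by (rule r)
    finally show ?thesis
      by simp
  qed
  have "\<exists>p. norm p = 1 \<and> (\<forall>z\<in>cball 0 1. 0 \<le> (z - p) \<bullet> (f (r n *\<^sub>R z) - u))" for n
  proof -
    have "continuous_on (cball 0 1) (\<lambda>z. f (r n *\<^sub>R z))"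
      by (rule continuous_on_compose2[OF cont]) (auto intro!: continuous_intros scaled)
    moreover have "monotone_operator_on (cball 0 1) (\<lambda>z. f (r n *\<^sub>R z))"
      unfolding monotone_operator_on_def
    proof (intro ballI)
      fix x y :: 'a assume "x \<in> cball 0 1" "y \<in> cball 0 1"
      have "0 \<le> (r n *\<^sub>R y - r n *\<^sub>R x) \<bullet> (f (r n *\<^sub>R y) - f (r n *\<^sub>R x))"
        using monotone_operator_onD[OF mono scaled scaled] \<open>x \<in> cball 0 1\<close> \<open>y \<in> cball 0 1\<close> .
      then show "0 \<le> (y - x) \<bullet> (f (r n *\<^sub>R y) - f (r n *\<^sub>R x))"
        using r[of n] by (simp add: scaleR_diff_right[symmetric] zero_le_mult_iff)
    qed
    moreover have "u \<notin> (\<lambda>z. f (r n *\<^sub>R z)) ` cball 0 1"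
      using u scaled by auto
    ultimately show ?thesis
      by (metis monotone_boundary_value_exists_cball)
  qed
  then obtain P where P: "\<And>n. norm (P n) = 1"
    "\<And>n z. z \<in> cball 0 1 \<Longrightarrow> 0 \<le> (z - P n) \<bullet> (f (r n *\<^sub>R z) - u)"
    by metis
  have "\<forall>n. P n \<in> sphere 0 1"
    using P(1) by simp
  then obtain p \<sigma> where "p \<in> sphere 0 1" "strict_mono \<sigma>" "(P \<circ> \<sigma>) \<longlonglongrightarrow> p"
    using seq_compactE[OF compact_imp_seq_compact[OF compact_sphere]] by metis
  have "r \<longlonglongrightarrow> 1"
    unfolding r_def by real_asymp
  have "0 \<le> (z - p) \<bullet> (f z - u)" if z: "z \<in> ball 0 1" for z
  proof -
    have "(\<lambda>n. r (\<sigma> n) *\<^sub>R z) \<longlonglongrightarrow> 1 *\<^sub>R z"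
      using LIMSEQ_subseq_LIMSEQ[OF \<open>r \<longlonglongrightarrow> 1\<close> \<open>strict_mono \<sigma>\<close>]
      by (intro tendsto_intros) (simp add: comp_def)
    then have "(\<lambda>n. f (r (\<sigma> n) *\<^sub>R z)) \<longlonglongrightarrow> f z"
      using continuous_on_interior[OF cont, of z] z isCont_tendsto_compose[of z f] by (simp add: interior_open)
    with \<open>(P \<circ> \<sigma>) \<longlonglongrightarrow> p\<close>
    have "(\<lambda>n. (z - P (\<sigma> n)) \<bullet> (f (r (\<sigma> n) *\<^sub>R z) - u)) \<longlonglongrightarrow> (z - p) \<bullet> (f z - u)"
      by (intro tendsto_intros) (simp_all add: comp_def)
    then show ?thesis
      by (rule LIMSEQ_le_const) (use P(2) z in auto)
  qed
  then show ?thesis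
    using that \<open>p \<in> sphere 0 1\<close> by (auto simp: monotone_boundary_values_def)
qed

lemma closed_inter_line_eq_ray:
  fixes C :: "'a::real_inner set"
  assumes "closed C" "u \<in> C" "d \<noteq> 0"
    and ray: "\<And>x t. x \<in> C \<Longrightarrow> 0 \<le> t \<Longrightarrow> x + t *\<^sub>R d \<in> C"
    and bdd: "\<And>x. x \<in> C \<Longrightarrow> c \<le> d \<bullet> x"
  obtains a where "C \<inter> range (\<lambda>t. u + t *\<^sub>R d) = {a + t *\<^sub>R d | t. 0 \<le> t}"
proof -
  define T where "T = {t. u + t *\<^sub>R d \<in> C}"
  have "T = (\<lambda>t. u + t *\<^sub>R d) -` C"
    by (auto simp: T_def)
  then have "closed T"
    using \<open>closed C\<close> by (auto intro!: closed_vimage continuous_intros)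
  moreover have "0 \<in> T"
    using \<open>u \<in> C\<close> by (simp add: T_def)
  moreover have "bdd_below T"
  proof
    fix t assume "t \<in> T"
    then have "c \<le> d \<bullet> u + t * (d \<bullet> d)"
      using bdd by (force simp: T_def inner_add_right)
    then show "(c - d \<bullet> u) / (d \<bullet> d) \<le> t"
      using \<open>d \<noteq> 0\<close> by (simp add: divide_le_eq algebra_simps)
  qed
  ultimately have "Inf T \<in> T"
    using closed_contains_Inf by blast
  define a where "a = u + Inf T *\<^sub>R d"
  have T_eq: "t \<in> T \<longleftrightarrow> Inf T \<le> t" for t
  proof
    assume "t \<in> T"
    then show "Inf T \<le> t"
      by (rule cInf_lower) fact
  next
    assume "Inf T \<le> t"
    then have "a + (t - Inf T) *\<^sub>R d \<in> C"
      using ray \<open>Inf T \<in> T\<close> by (simp add: a_def T_def)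
    then show "t \<in> T"
      by (simp add: T_def a_def algebra_simps)
  qed
  have "C \<inter> range (\<lambda>t. u + t *\<^sub>R d) = {a + t *\<^sub>R d | t. 0 \<le> t}"
  proof (intro equalityI subsetI)
    fix x assume "x \<in> C \<inter> range (\<lambda>t. u + t *\<^sub>R d)"
    then obtain t where "x = u + t *\<^sub>R d" "t \<in> T"
      by (auto simp: T_def)
    then show "x \<in> {a + t *\<^sub>R d | t. 0 \<le> t}"
      using T_eq by (intro CollectI exI[of _ "t - Inf T"]) (auto simp: a_def algebra_simps)
  next
    fix x assume "x \<in> {a + t *\<^sub>R d | t. 0 \<le> t}"
    then obtain s where "x = u + (Inf T + s) *\<^sub>R d" "0 \<le> s"
      by (auto simp: a_def algebra_simps)
    then show "x \<in> C \<inter> range (\<lambda>t. u + t *\<^sub>R d)"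
      using T_eq[of "Inf T + s"] by (auto simp: T_def)
  qed
  then show ?thesis
    using that by blast
qed

lemma range_line_eq:
  fixes u v d :: "'a::real_vector"
  assumes "v \<in> range (\<lambda>t. u + t *\<^sub>R d)"
  shows "range (\<lambda>t. v + t *\<^sub>R d) = range (\<lambda>t. u + t *\<^sub>R d)"
proof -
  obtain c where v: "v = u + c *\<^sub>R d"
    using assms by auto
  show ?thesis
  proof (intro equalityI subsetI)
    fix x assume "x \<in> range (\<lambda>t. v + t *\<^sub>R d)"
    then obtain t where "x = v + t *\<^sub>R d"
      by blast
    then show "x \<in> range (\<lambda>t. u + t *\<^sub>R d)"
      by (intro range_eqI[where x = "c + t"]) (simp add: v algebra_simps)
  next
    fix x assume "x \<in> range (\<lambda>t. u + t *\<^sub>R d)"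
    then obtain t where "x = u + t *\<^sub>R d"
      by blast
    then show "x \<in> range (\<lambda>t. v + t *\<^sub>R d)"
      by (intro range_eqI[where x = "t - c"]) (simp add: v algebra_simps)
  qed
qed

lemma complement_image_union_disjoint_rays:
  fixes f :: "'a::euclidean_space \<Rightarrow> 'a"
  assumes cont: "continuous_on (ball 0 1) f" and mono: "strictly_monotone_operator_on (ball 0 1) f"
  obtains L where "\<And>R. R \<in> L \<Longrightarrow> \<exists>a d. d \<noteq> 0 \<and> R = {a + t *\<^sub>R d | t. 0 \<le> t}"
    and "pairwise disjnt L" and "\<Union>L = - f ` ball 0 1"
proof -
  let ?A = "monotone_boundary_values f"
  define K where "K = - f ` ball 0 1"
  define dir where "dir u = (SOME p. norm p = 1 \<and> u \<in> ?A p)" for u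
  define ray where "ray u = ?A (dir u) \<inter> range (\<lambda>t. u + t *\<^sub>R dir u)" for u
  have dir: "norm (dir u) = 1 \<and> u \<in> ?A (dir u)" if "u \<in> K" for u
  proof -
    obtain p where "norm p = 1" "u \<in> ?A p"
      using monotone_boundary_value_exists[OF cont strictly_monotone_operator_on_imp_monotone[OF mono]]
        \<open>u \<in> K\<close> by (auto simp: K_def)
    then show ?thesis
      unfolding dir_def by (rule someI[where x = p, OF conjI])
  qed
  have ray_in_K: "ray u \<subseteq> K" if "u \<in> K" for u
    using monotone_boundary_values_disjnt_image[OF mono] dir[OF that] by (auto simp: ray_def K_def)
  have ray_self: "u \<in> ray u" if "u \<in> K" for u
    using dir[OF that] by (auto simp: ray_def intro: range_eqI[where x = 0])
  have ray_half_line: "\<exists>a d. d \<noteq> 0 \<and> ray u = {a + t *\<^sub>R d | t. 0 \<le> t}" if uK: "u \<in> K" for u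
  proof -
    have "dir u \<noteq> 0"
      using dir[OF uK] by auto
    have add: "x + t *\<^sub>R dir u \<in> ?A (dir u)" if "x \<in> ?A (dir u)" "0 \<le> t" for x t
      using monotone_boundary_values_add_ray dir[OF uK] that by blast
    obtain a where "?A (dir u) \<inter> range (\<lambda>t. u + t *\<^sub>R dir u) = {a + t *\<^sub>R dir u | t. 0 \<le> t}"
      using closed_inter_line_eq_ray[OF closed_monotone_boundary_values _ \<open>dir u \<noteq> 0\<close> add
          monotone_boundary_values_lower_bound] dir[OF uK] by blast
    with \<open>dir u \<noteq> 0\<close> show ?thesis
      unfolding ray_def by blast
  qed
  have ray_eq: "ray u = ray w" if "u \<in> K" "w \<in> K" "v \<in> ray u" "v \<in> ray w" for u w v
  proof -
    have "dir u = dir w"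
      using monotone_boundary_values_unique[OF mono] dir that by (auto simp: ray_def)
    then show ?thesis
      using that(3,4) range_line_eq unfolding ray_def by (metis Int_iff)
  qed
  show ?thesis
  proof
    show "\<And>R. R \<in> ray ` K \<Longrightarrow> \<exists>a d. d \<noteq> 0 \<and> R = {a + t *\<^sub>R d | t. 0 \<le> t}"
      using ray_half_line by blast
    show "pairwise disjnt (ray ` K)"
      unfolding pairwise_def disjnt_def using ray_eq by blast
    show "\<Union> (ray ` K) = - f ` ball 0 1"
      using ray_in_K ray_self unfolding K_def by blast
  qed
qed

lemma close_to_convex_if_strictly_monotone_operator_on:
  assumes "continuous_on unit_disk f" "strictly_monotone_operator_on unit_disk f"
  shows "close_to_convex f"
proof -
  obtain L where rays: "\<And>R. R \<in> L \<Longrightarrow> \<exists>a d. d \<noteq> 0 \<and> R = {a + t *\<^sub>R d | t. 0 \<le> t}"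
    and "pairwise disjnt L" "\<Union>L = - f ` unit_disk"
    using complement_image_union_disjoint_rays[OF assms] by blast
  have "half_line R" if "R \<in> L" for R
    using rays[OF that] unfolding half_line_def by (simp add: scaleR_conv_of_real)
  moreover have "inj_on f unit_disk"
    using assms(2) by (rule strictly_monotone_operator_on_imp_inj_on)
  ultimately show ?thesis
    unfolding close_to_convex_def using \<open>pairwise disjnt L\<close> \<open>\<Union>L = - f ` unit_disk\<close> by blast
qed

theorem theorem2p4:
  fixes \<alpha> \<beta> :: real and h g :: "complex \<Rightarrow> complex"
  assumes "\<alpha> \<ge> 0" and "0 \<le> \<beta>" and "\<beta> < 1"
    and "class_WH0 \<alpha> \<beta> h g"
  shows "close_to_convex (\<lambda>z. h z + cnj (g z)) \<and> inj_on (\<lambda>z. h z + cnj (g z)) unit_disk"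
proof -
  have h: "h holomorphic_on unit_disk" and g: "g holomorphic_on unit_disk"
    using assms(4) unfolding class_WH0_def class_H0_def by auto
  have "cmod (deriv g w) < Re (deriv h w)" if "w \<in> unit_disk" for w
    using class_WH0_Re_deriv_gt[OF assms(4,1,3) that] \<open>0 \<le> \<beta>\<close> by linarith
  then have "strictly_monotone_operator_on unit_disk (\<lambda>z. h z + cnj (g z))"
    by (rule strictly_monotone_operator_on_harmonic[OF h g open_ball convex_ball])
  moreover have "continuous_on unit_disk (\<lambda>z. h z + cnj (g z))"
    using holomorphic_on_imp_continuous_on[OF h] holomorphic_on_imp_continuous_on[OF g]
    by (intro continuous_intros)
  ultimately have "close_to_convex (\<lambda>z. h z + cnj (g z))"
    by (rule close_to_convex_if_strictly_monotone_operator_on[rotated])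
  then show ?thesis
    unfolding close_to_convex_def by blast
qed

end
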